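(* Let $G$ be a finite simple graph containing two vertices $u$ and $v$ such that there is a unique path in $G$ between $u$ and $v$, this path has length at least $7$, and every inner vertex of this path has degree $2$ in $G$. Then $G$ has at least one adjacency eigenvalue that is not an integer. *)

theory Defs
  imports "Jordan_Normal_Form.Char_Poly"
begin

definition simple_graph :: "nat \<Rightarrow> (nat \<Rightarrow> nat \<Rightarrow> bool) \<Rightarrow> bool" where
  "simple_graph n E \<longleftrightarrow>
     (\<forall>i j. E i j \<longrightarrow> i < n \<and> j < n) \<and> (\<forall>i j. E i j \<longrightarrow> E j i) \<and> (\<forall>i. \<not> E i i)"

definition adj_matrix :: "nat \<Rightarrow> (nat \<Rightarrow> nat \<Rightarrow> bool) \<Rightarrow> real mat" where
  "adj_matrix n E = mat n n (\<lambda>(i, j). if E i j then 1 else 0)"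

definition graph_degree :: "nat \<Rightarrow> (nat \<Rightarrow> nat \<Rightarrow> bool) \<Rightarrow> nat \<Rightarrow> nat" where
  "graph_degree n E x = card {y. y < n \<and> E x y}"

text \<open>A path from u to v, given as the list of its vertices (pairwise distinct,
consecutive ones adjacent). Its length (number of edges) is length p - 1.\<close>
definition graph_path :: "(nat \<Rightarrow> nat \<Rightarrow> bool) \<Rightarrow> nat list \<Rightarrow> nat \<Rightarrow> nat \<Rightarrow> bool" where
  "graph_path E p u v \<longleftrightarrow>
     p \<noteq> [] \<and> hd p = u \<and> last p = v \<and> distinct p \<and>
     (\<forall>i. Suc i < length p \<longrightarrow> E (p ! i) (p ! Suc i))"

end

theory Submission
  imports Defs "HOL-Analysis.Function_Topology" "HOL-Computational_Algebra.Polynomial"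
begin

(* Let A be the adjacency operator and f t = t\<^sup>2 (t\<^sup>2 - 1) (t\<^sup>2 - 4)
   (path_test_poly), which is nonnegative at every integer. Take the indicator x of the middle
   vertex of seven consecutive path vertices whose five inner vertices have degree 2. Counting
   walks gives |A x|\<^sup>2 = 2, |A\<^sup>2 x|\<^sup>2 = 6 and |A\<^sup>3 x|\<^sup>2 = 20, hence
   <x, f(A) x> = 20 - 5 * 6 + 4 * 2 = -2 < 0. So the least eigenvalue mu of the symmetric
   operator f(A) is negative. Its eigenspace is A-invariant and therefore contains an
   eigenvector of A; the eigenvalue lam of that vector satisfies f lam = mu < 0, so lam is not
   an integer. Eigenvectors are obtained variationally: the quadratic form of a symmetric
   operator attains its minimum on the (compact) unit sphere of an invariant subspace, and a
   minimiser is an eigenvector. *)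

section \<open>Vectors supported on the first n coordinates\<close>

definition dot :: "nat \<Rightarrow> (nat \<Rightarrow> real) \<Rightarrow> (nat \<Rightarrow> real) \<Rightarrow> real" where
  "dot n u v = (\<Sum>i<n. u i * v i)"

(* Vectors of R^n are modelled as functions nat \<Rightarrow> real vanishing from n on, so that the
   product topology of nat \<Rightarrow> real makes the unit sphere compact. *)
definition vecs_below :: "nat \<Rightarrow> (nat \<Rightarrow> real) set" where
  "vecs_below n = {v. \<forall>i\<ge>n. v i = 0}"

definition lin_closed :: "(nat \<Rightarrow> real) set \<Rightarrow> bool" where
  "lin_closed S \<longleftrightarrow> (\<forall>u\<in>S. \<forall>v\<in>S. \<forall>a b. (\<lambda>i. a * u i + b * v i) \<in> S)"

lemma dot_commute: "dot n u v = dot n v u"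
  by (simp add: dot_def mult.commute)

lemma dot_add_left: "dot n (\<lambda>i. u i + v i) w = dot n u w + dot n v w"
  by (simp add: dot_def sum.distrib algebra_simps)

lemma dot_add_right: "dot n w (\<lambda>i. u i + v i) = dot n w u + dot n w v"
  by (simp add: dot_def sum.distrib algebra_simps)

lemma dot_diff_right: "dot n w (\<lambda>i. u i - v i) = dot n w u - dot n w v"
  by (simp add: dot_def sum_subtractf algebra_simps)

lemma dot_scale_left: "dot n (\<lambda>i. c * u i) v = c * dot n u v"
  by (simp add: dot_def sum_distrib_left algebra_simps)

lemma dot_scale_right: "dot n u (\<lambda>i. c * v i) = c * dot n u v"
  by (simp add: dot_def sum_distrib_left algebra_simps)

lemma dot_sum_right: "dot n u (\<lambda>i. \<Sum>k\<in>K. f k i) = (\<Sum>k\<in>K. dot n u (f k))"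
  by (simp add: dot_def sum_distrib_left sum.swap[of _ K])

lemma dot_sum_left: "dot n (\<lambda>i. \<Sum>k\<in>K. f k i) u = (\<Sum>k\<in>K. dot n (f k) u)"
  by (simp add: dot_def sum_distrib_right sum.swap[of _ K])

lemma dot_self_nonneg: "0 \<le> dot n u u"
  by (simp add: dot_def sum_nonneg)

lemma dot_self_eq_0_iff: "dot n u u = 0 \<longleftrightarrow> (\<forall>i<n. u i = 0)"
  unfolding dot_def by (subst sum_nonneg_eq_0_iff) auto

lemma dot_eq_0_if_self_eq_0: "dot n u u = 0 \<Longrightarrow> dot n u v = 0"
  unfolding dot_self_eq_0_iff by (simp add: dot_def)

lemma dot_self_normalize:
  assumes "dot n u u \<noteq> 0"
  shows "dot n (\<lambda>i. inverse (sqrt (dot n u u)) * u i) (\<lambda>i. inverse (sqrt (dot n u u)) * u i) = 1"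
proof -
  have "0 < dot n u u"
    using assms dot_self_nonneg[of n u] by linarith
  then show ?thesis
    unfolding dot_scale_left dot_scale_right by (simp add: field_simps)
qed

lemma vecs_below_eqI:
  assumes "u \<in> vecs_below n" "v \<in> vecs_below n" "\<And>i. i < n \<Longrightarrow> u i = v i"
  shows "u = v"
proof
  fix i
  show "u i = v i"
    using assms by (cases "i < n") (simp_all add: vecs_below_def)
qed

lemma continuous_on_dot:
  assumes "\<And>i. continuous_on A (\<lambda>x. f x i)" "\<And>i. continuous_on A (\<lambda>x. g x i)"
  shows "continuous_on A (\<lambda>x. dot n (f x) (g x))"
  unfolding dot_def by (intro continuous_intros assms)

lemma closed_vecs_below: "closed (vecs_below n)"
  unfolding vecs_below_def
  by (intro closed_Collect_all closed_Collect_imp closed_Collect_eq continuous_intros) simp_all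

lemma compact_unit_sphere_vecs_below: "compact {v \<in> vecs_below n. dot n v v = 1}"
proof -
  define B where "B = PiE UNIV (\<lambda>i. if i < n then {-1..1::real} else {0})"
  have "compactin (product_topology (\<lambda>_. euclidean) UNIV) B"
    unfolding B_def by (subst compactin_PiE) auto
  then have "compact B"
    by (simp add: euclidean_product_topology)
  moreover have "closed {v \<in> vecs_below n. dot n v v = 1}"
    using closed_vecs_below
    by (simp add: Collect_conj_eq) (intro closed_Int closed_Collect_eq continuous_on_dot; simp)
  moreover have "{v \<in> vecs_below n. dot n v v = 1} \<subseteq> B"
  proof safe
    fix v assume v: "v \<in> vecs_below n" "dot n v v = 1"
    have "v i \<in> {-1..1}" if "i < n" for i
    proof -
      have "v i ^ 2 \<le> dot n v v"
        unfolding dot_def power2_eq_square using that by (intro member_le_sum) auto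
      then show ?thesis
        using v(2) abs_square_le_1[of "v i"] by (simp add: abs_le_iff)
    qed
    then show "v \<in> B"
      using v(1) by (auto simp: B_def vecs_below_def PiE_UNIV_domain)
  qed
  ultimately show ?thesis
    using compact_Int_closed[of B "{v \<in> vecs_below n. dot n v v = 1}"] by (simp add: Int_absorb1)
qed

lemma linear_coeff_eq_0_if_quadratic_nonneg:
  fixes a b :: real
  assumes "\<And>t. 0 \<le> a * t + b * t\<^sup>2"
  shows "a = 0"
proof (rule ccontr)
  assume "a \<noteq> 0"
  define s where "s = a / (\<bar>b\<bar> + 1)"
  have a_eq: "a = (\<bar>b\<bar> + 1) * s"
    by (simp add: s_def add_nonneg_pos)
  have "a * (- s) + b * (- s)\<^sup>2 \<le> a * (- s) + \<bar>b\<bar> * s\<^sup>2"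
    by (simp add: mult_right_mono)
  also have "\<dots> = - s\<^sup>2"
    unfolding a_eq by (simp add: power2_eq_square algebra_simps)
  also have "\<dots> < 0"
    using \<open>a \<noteq> 0\<close> a_eq by simp
  finally show False
    using assms[of "- s"] by simp
qed

lemma lin_closedD: "lin_closed S \<Longrightarrow> u \<in> S \<Longrightarrow> v \<in> S \<Longrightarrow> (\<lambda>i. a * u i + b * v i) \<in> S"
  unfolding lin_closed_def by blast

lemma lin_closed_scale: "lin_closed S \<Longrightarrow> u \<in> S \<Longrightarrow> (\<lambda>i. c * u i) \<in> S"
  using lin_closedD[of S u u c 0] by simp

lemma lin_closed_vecs_below: "lin_closed (vecs_below n)"
  by (simp add: lin_closed_def vecs_below_def)

lemma dot_self_add:
  "dot n (\<lambda>i. v i + t * w i) (\<lambda>i. v i + t * w i) = dot n v v + 2 * t * dot n w v + t\<^sup>2 * dot n w w"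
  by (simp add: dot_add_left dot_add_right dot_scale_left dot_scale_right dot_commute[of n v w]
      power2_eq_square algebra_simps)

section \<open>Symmetric operators and the Rayleigh quotient\<close>

locale symmetric_operator =
  fixes n :: nat and T :: "(nat \<Rightarrow> real) \<Rightarrow> nat \<Rightarrow> real"
  assumes linear: "T (\<lambda>i. a * u i + b * v i) = (\<lambda>i. a * T u i + b * T v i)"
    and symmetric: "dot n u (T v) = dot n (T u) v"
    and continuous_on_coordinate: "continuous_on UNIV (\<lambda>v. T v i)"
    and vecs_below_closed: "v \<in> vecs_below n \<Longrightarrow> T v \<in> vecs_below n"
begin

lemma scale: "T (\<lambda>i. c * u i) = (\<lambda>i. c * T u i)"
  using linear[of c u 0 u] by simp

lemma add: "T (\<lambda>i. u i + v i) = (\<lambda>i. T u i + T v i)"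
  using linear[of 1 u 1 v] by simp

lemma quadratic_form_add:
  "dot n (\<lambda>i. v i + t * w i) (T (\<lambda>i. v i + t * w i))
     = dot n v (T v) + 2 * t * dot n w (T v) + t\<^sup>2 * dot n w (T w)"
proof -
  have "dot n v (T w) = dot n w (T v)"
    unfolding symmetric[of v w] by (rule dot_commute)
  then show ?thesis
    by (simp add: add scale dot_add_left dot_add_right dot_scale_left dot_scale_right
        power2_eq_square algebra_simps)
qed

lemma quadratic_form_bound_if_unit_bound:
  assumes "lin_closed S" "u \<in> S"
    and unit_bound: "\<And>u. u \<in> S \<Longrightarrow> dot n u u = 1 \<Longrightarrow> lam \<le> dot n u (T u)"
  shows "lam * dot n u u \<le> dot n u (T u)"
proof (cases "dot n u u = 0")
  case True
  then show ?thesis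
    by (simp add: dot_eq_0_if_self_eq_0)
next
  case False
  define c where "c = inverse (sqrt (dot n u u))"
  have unit: "dot n (\<lambda>i. c * u i) (\<lambda>i. c * u i) = 1"
    unfolding c_def using False by (rule dot_self_normalize)
  then have "c\<^sup>2 * dot n u u = 1"
    by (simp add: dot_scale_left dot_scale_right power2_eq_square)
  have "lam \<le> dot n (\<lambda>i. c * u i) (T (\<lambda>i. c * u i))"
    using unit_bound[OF lin_closed_scale[OF assms(1,2)] unit] .
  also have "\<dots> = c\<^sup>2 * dot n u (T u)"
    by (simp add: scale dot_scale_left dot_scale_right power2_eq_square)
  finally have "lam * dot n u u \<le> c\<^sup>2 * dot n u (T u) * dot n u u"
    using dot_self_nonneg by (rule mult_right_mono)
  also have "\<dots> = dot n u (T u) * (c\<^sup>2 * dot n u u)"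
    by (simp add: algebra_simps)
  finally show ?thesis
    using \<open>c\<^sup>2 * dot n u u = 1\<close> by simp
qed

lemma exists_rayleigh_minimizer:
  assumes "closed S" "S \<subseteq> vecs_below n" "lin_closed S" "x \<in> S" "dot n x x \<noteq> 0"
  shows "\<exists>v\<in>S. dot n v v = 1 \<and> (\<forall>u\<in>S. dot n v (T v) * dot n u u \<le> dot n u (T u))"
proof -
  define K where "K = {v \<in> vecs_below n. dot n v v = 1} \<inter> S"
  have "compact K"
    unfolding K_def using compact_unit_sphere_vecs_below \<open>closed S\<close> by (rule compact_Int_closed)
  moreover have "(\<lambda>i. inverse (sqrt (dot n x x)) * x i) \<in> K"
    using lin_closed_scale[OF assms(3,4)] dot_self_normalize[OF assms(5)] assms(2)
    by (auto simp: K_def)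
  moreover have "continuous_on K (\<lambda>v. dot n v (T v))"
    by (intro continuous_on_dot continuous_on_subset[OF continuous_on_product_coordinates subset_UNIV]
        continuous_on_subset[OF continuous_on_coordinate subset_UNIV])
  ultimately obtain v where v: "v \<in> K" "\<And>u. u \<in> K \<Longrightarrow> dot n v (T v) \<le> dot n u (T u)"
    using continuous_attains_inf[of K "\<lambda>v. dot n v (T v)"] by blast
  have "dot n v (T v) * dot n u u \<le> dot n u (T u)" if "u \<in> S" for u
    using \<open>lin_closed S\<close> that
  proof (rule quadratic_form_bound_if_unit_bound)
    show "dot n v (T v) \<le> dot n u (T u)" if "u \<in> S" "dot n u u = 1" for u
      using v(2) that assms(2) by (auto simp: K_def)
  qed
  then show ?thesis
    using v(1) unfolding K_def by blast
qed

lemma eigenvector_if_attains_quadratic_form_bound: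
  assumes S: "S \<subseteq> vecs_below n" "lin_closed S" "\<And>u. u \<in> S \<Longrightarrow> T u \<in> S"
    and bound: "\<And>u. u \<in> S \<Longrightarrow> lam * dot n u u \<le> dot n u (T u)"
    and "v \<in> S" and attained: "dot n v (T v) = lam * dot n v v"
  shows "T v = (\<lambda>i. lam * v i)"
proof -
  \<comment> \<open>Along v + t w the nonnegative form u \<mapsto> dot u (T u) - lam dot u u
    starts with 2 t |w|^2, which forces w = 0.\<close>
  define w where "w = (\<lambda>i. T v i - lam * v i)"
  have "w \<in> S"
    using lin_closedD[OF S(2) S(3)[OF \<open>v \<in> S\<close>] \<open>v \<in> S\<close>, of 1 "- lam"] by (simp add: w_def)
  have "dot n w w = dot n w (\<lambda>i. T v i - lam * v i)"
    by (simp add: w_def)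
  then have dot_w: "dot n w (T v) = dot n w w + lam * dot n w v"
    by (simp add: dot_diff_right dot_scale_right)
  have "0 \<le> (2 * dot n w w) * t + (dot n w (T w) - lam * dot n w w) * t\<^sup>2" for t
  proof -
    have "(\<lambda>i. 1 * v i + t * w i) \<in> S"
      using S(2) \<open>v \<in> S\<close> \<open>w \<in> S\<close> by (rule lin_closedD)
    then have "0 \<le> dot n (\<lambda>i. v i + t * w i) (T (\<lambda>i. v i + t * w i))
        - lam * dot n (\<lambda>i. v i + t * w i) (\<lambda>i. v i + t * w i)"
      using bound by simp
    also have "\<dots> = (2 * dot n w w) * t + (dot n w (T w) - lam * dot n w w) * t\<^sup>2"
      unfolding quadratic_form_add dot_self_add attained dot_w by (simp add: algebra_simps)
    finally show ?thesis .
  qed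
  then have "2 * dot n w w = 0"
    by (rule linear_coeff_eq_0_if_quadratic_nonneg)
  then have "T v i = lam * v i" if "i < n" for i
    using that by (simp add: dot_self_eq_0_iff w_def)
  moreover have "T v \<in> vecs_below n" "(\<lambda>i. lam * v i) \<in> vecs_below n"
    using S \<open>v \<in> S\<close> by (auto simp: vecs_below_def)
  ultimately show ?thesis
    by (intro vecs_below_eqI)
qed

lemma exists_min_eigenvector:
  assumes "closed S" "S \<subseteq> vecs_below n" "lin_closed S" "\<And>u. u \<in> S \<Longrightarrow> T u \<in> S"
    and "x \<in> S" "dot n x x \<noteq> 0"
  obtains v lam where "v \<in> S" "dot n v v = 1" "T v = (\<lambda>i. lam * v i)"
    "\<And>u. u \<in> S \<Longrightarrow> lam * dot n u u \<le> dot n u (T u)"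
proof -
  obtain v where v: "v \<in> S" "dot n v v = 1"
    and bound: "\<And>u. u \<in> S \<Longrightarrow> dot n v (T v) * dot n u u \<le> dot n u (T u)"
    using exists_rayleigh_minimizer[OF assms(1-3,5,6)] by blast
  have "T v = (\<lambda>i. dot n v (T v) * v i)"
    by (rule eigenvector_if_attains_quadratic_form_bound[OF assms(2-4) bound v(1)])
      (simp_all add: v(2))
  then show ?thesis
    by (rule that[OF v _ bound])
qed

end

section \<open>Polynomials in a symmetric operator\<close>

lemma symmetric_operator_sum:
  assumes "finite K" "\<And>k. k \<in> K \<Longrightarrow> symmetric_operator n (T k)"
  shows "symmetric_operator n (\<lambda>v i. \<Sum>k\<in>K. c k * T k v i)"
proof
  fix a b :: real and u v :: "nat \<Rightarrow> real"
  have "(\<Sum>k\<in>K. c k * T k (\<lambda>i. a * u i + b * v i) i)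
      = (\<Sum>k\<in>K. c k * (a * T k u i + b * T k v i))" for i
  proof (rule sum.cong)
    fix k assume "k \<in> K"
    then show "c k * T k (\<lambda>i. a * u i + b * v i) i = c k * (a * T k u i + b * T k v i)"
      by (simp add: symmetric_operator.linear[OF assms(2)])
  qed simp
  then show "(\<lambda>i. \<Sum>k\<in>K. c k * T k (\<lambda>i. a * u i + b * v i) i)
      = (\<lambda>i. a * (\<Sum>k\<in>K. c k * T k u i) + b * (\<Sum>k\<in>K. c k * T k v i))"
    by (simp add: sum.distrib sum_distrib_left algebra_simps)
  have "dot n u (T k v) = dot n (T k u) v" if "k \<in> K" for k
    using assms(2)[OF that] by (rule symmetric_operator.symmetric)
  then show "dot n u (\<lambda>i. \<Sum>k\<in>K. c k * T k v i) = dot n (\<lambda>i. \<Sum>k\<in>K. c k * T k u i) v"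
    by (simp add: dot_sum_left dot_sum_right dot_scale_left dot_scale_right)
next
  fix i
  show "continuous_on UNIV (\<lambda>v. \<Sum>k\<in>K. c k * T k v i)"
    using assms(2)
    by (intro continuous_on_sum continuous_on_mult_left symmetric_operator.continuous_on_coordinate)
next
  fix v assume "v \<in> vecs_below n"
  then have "T k v \<in> vecs_below n" if "k \<in> K" for k
    using assms(2)[OF that] by (rule symmetric_operator.vecs_below_closed[rotated])
  then show "(\<lambda>i. \<Sum>k\<in>K. c k * T k v i) \<in> vecs_below n"
    by (simp add: vecs_below_def)
qed

definition poly_op :: "real poly \<Rightarrow> ((nat \<Rightarrow> real) \<Rightarrow> nat \<Rightarrow> real) \<Rightarrow> (nat \<Rightarrow> real) \<Rightarrow> nat \<Rightarrow> real"
  where "poly_op P T = (\<lambda>v i. \<Sum>k\<le>degree P. coeff P k * (T ^^ k) v i)"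

context symmetric_operator
begin

lemma symmetric_operator_funpow: "symmetric_operator n (T ^^ k)"
proof (induction k)
  case 0
  show ?case
    by unfold_locales simp_all
next
  case (Suc k)
  interpret Tk: symmetric_operator n "T ^^ k"
    by (fact Suc.IH)
  show ?case
  proof unfold_locales
    fix a b :: real and u v :: "nat \<Rightarrow> real"
    show "(T ^^ Suc k) (\<lambda>i. a * u i + b * v i) = (\<lambda>i. a * (T ^^ Suc k) u i + b * (T ^^ Suc k) v i)"
      by (simp add: Tk.linear linear)
    have "dot n u (T ((T ^^ k) v)) = dot n ((T ^^ k) (T u)) v"
      by (simp add: symmetric Tk.symmetric)
    then show "dot n u ((T ^^ Suc k) v) = dot n ((T ^^ Suc k) u) v"
      by (simp add: funpow_swap1)
  next
    fix i
    have "continuous_on UNIV (T ^^ k)"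
      by (rule continuous_on_coordinatewise_then_product[OF Tk.continuous_on_coordinate])
    then show "continuous_on UNIV (\<lambda>v. (T ^^ Suc k) v i)"
      using continuous_on_compose2[OF continuous_on_coordinate[of i]] by simp
  next
    fix v :: "nat \<Rightarrow> real"
    assume "v \<in> vecs_below n"
    then show "(T ^^ Suc k) v \<in> vecs_below n"
      by (simp add: Tk.vecs_below_closed vecs_below_closed)
  qed
qed

lemma symmetric_operator_poly_op: "symmetric_operator n (poly_op P T)"
  unfolding poly_op_def by (intro symmetric_operator_sum symmetric_operator_funpow) simp

lemma linear_sum: "finite K \<Longrightarrow> T (\<lambda>i. \<Sum>k\<in>K. c k * f k i) = (\<lambda>i. \<Sum>k\<in>K. c k * T (f k) i)"
proof (induction K rule: finite_induct)
  case empty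
  show ?case
    using scale[of 0] by simp
next
  case (insert k K)
  then show ?case
    using linear[of "c k" "f k" 1 "\<lambda>i. \<Sum>k\<in>K. c k * f k i"] by simp
qed

lemma poly_op_commute: "T (poly_op P T v) = poly_op P T (T v)"
  unfolding poly_op_def by (simp add: linear_sum funpow_swap1)

lemma funpow_eigenvector:
  assumes "T v = (\<lambda>i. c * v i)"
  shows "(T ^^ k) v = (\<lambda>i. c ^ k * v i)"
proof (induction k)
  case (Suc k)
  have "(T ^^ Suc k) v = (\<lambda>i. c ^ k * T v i)"
    using Suc.IH by (simp add: scale)
  then show ?case
    using assms by (simp add: algebra_simps)
qed simp

lemma poly_op_eigenvector: "T v = (\<lambda>i. c * v i) \<Longrightarrow> poly_op P T v = (\<lambda>i. poly P c * v i)"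
  by (simp add: poly_op_def poly_altdef funpow_eigenvector sum_distrib_right mult.assoc)

lemma dot_poly_op: "dot n u (poly_op P T v) = (\<Sum>k\<le>degree P. coeff P k * dot n u ((T ^^ k) v))"
  by (simp add: poly_op_def dot_sum_right dot_scale_right)

lemma dot_funpow_double: "dot n u ((T ^^ (k + k)) u) = dot n ((T ^^ k) u) ((T ^^ k) u)"
proof -
  interpret Tk: symmetric_operator n "T ^^ k"
    by (fact symmetric_operator_funpow)
  show ?thesis
    by (simp add: funpow_add Tk.symmetric)
qed

lemma exists_common_eigenvector:
  assumes "symmetric_operator n C" and commute: "\<And>w. T (C w) = C (T w)"
    and v0: "v0 \<in> vecs_below n" "dot n v0 v0 \<noteq> 0" "C v0 = (\<lambda>i. mu * v0 i)"
  obtains v lam where "v \<in> vecs_below n" "dot n v v = 1" "T v = (\<lambda>i. lam * v i)"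
    "C v = (\<lambda>i. mu * v i)"
proof -
  interpret C: symmetric_operator n C
    by fact
  define S where "S = {w \<in> vecs_below n. \<forall>i. C w i = mu * w i}"
  have "closed {w. C w i = mu * w i}" for i
    by (intro closed_Collect_eq C.continuous_on_coordinate continuous_on_mult_left
        continuous_on_product_coordinates)
  then have S_closed: "closed S"
    unfolding S_def Collect_conj_eq Collect_mem_eq
    by (intro closed_Int closed_vecs_below closed_Collect_all)
  have S_lin: "lin_closed S"
    by (simp add: S_def lin_closed_def vecs_below_def C.linear algebra_simps)
  have S_invariant: "T w \<in> S" if "w \<in> S" for w
  proof -
    have "C w = (\<lambda>i. mu * w i)"
      using that by (auto simp: S_def)
    then have "C (T w) = (\<lambda>i. mu * T w i)"
      by (simp flip: commute add: scale)
    then show ?thesis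
      using that vecs_below_closed by (simp add: S_def)
  qed
  have S_sub: "S \<subseteq> vecs_below n" and v0_S: "v0 \<in> S"
    using v0 by (auto simp: S_def)
  obtain v lam where "v \<in> S" "dot n v v = 1" "T v = (\<lambda>i. lam * v i)"
    using exists_min_eigenvector[OF S_closed S_sub S_lin S_invariant v0_S v0(2)] by blast
  then show ?thesis
    using that by (auto simp: S_def)
qed

theorem exists_eigenvector_poly_negative:
  assumes "x \<in> vecs_below n" "dot n x (poly_op P T x) < 0"
  obtains v lam where "v \<in> vecs_below n" "dot n v v = 1" "T v = (\<lambda>i. lam * v i)" "poly P lam < 0"
proof -
  interpret C: symmetric_operator n "poly_op P T"
    by (fact symmetric_operator_poly_op)
  have "dot n x x \<noteq> 0"
    using assms(2) dot_eq_0_if_self_eq_0 by force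
  then obtain v0 mu where v0: "v0 \<in> vecs_below n" "dot n v0 v0 = 1"
      "poly_op P T v0 = (\<lambda>i. mu * v0 i)"
    and bound: "\<And>u. u \<in> vecs_below n \<Longrightarrow> mu * dot n u u \<le> dot n u (poly_op P T u)"
    using C.exists_min_eigenvector[OF closed_vecs_below subset_refl lin_closed_vecs_below
        C.vecs_below_closed assms(1)] by blast
  have "mu * dot n x x < 0"
    using bound[OF assms(1)] assms(2) by linarith
  then have "mu < 0"
    using dot_self_nonneg[of n x] by (auto simp: mult_less_0_iff)
  obtain v lam where v: "v \<in> vecs_below n" "dot n v v = 1" "T v = (\<lambda>i. lam * v i)"
      "poly_op P T v = (\<lambda>i. mu * v i)"
    using exists_common_eigenvector[OF symmetric_operator_poly_op poly_op_commute v0(1) _ v0(3)] v0(2)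
    by auto
  obtain i where "i < n" "v i \<noteq> 0"
    using v(2) dot_self_eq_0_iff[of n v] by auto
  moreover have "poly P lam * v i = mu * v i"
    using fun_cong[OF v(4), of i] by (simp add: poly_op_eigenvector[OF v(3)])
  ultimately have "poly P lam < 0"
    using \<open>mu < 0\<close> by simp
  then show ?thesis
    using that v(1-3) by blast
qed

end

definition path_test_poly :: "real poly" where
  "path_test_poly = [:0, 0, 1:] * [:-1, 0, 1:] * [:-4, 0, 1:]"

lemma path_test_poly_coeffs: "path_test_poly = [:0, 0, 4, 0, -5, 0, 1:]"
  by (simp add: path_test_poly_def)

lemma poly_path_test_poly_nonneg_Ints:
  assumes "x \<in> \<int>"
  shows "0 \<le> poly path_test_poly x"
proof -
  obtain m where x: "x = of_int m"
    using assms by (auto elim: Ints_cases)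
  have poly_eq: "poly path_test_poly x = x\<^sup>2 * (x\<^sup>2 - 1) * (x\<^sup>2 - 4)"
    by (simp add: path_test_poly_def algebra_simps power2_eq_square)
  show ?thesis
  proof (cases "\<bar>m\<bar> \<le> 2")
    case True
    then have "m \<in> {-2, -1, 0, 1, 2}"
      by auto
    then have "x \<in> {-2, -1, 0, 1, 2}"
      unfolding x by auto
    then show ?thesis
      unfolding poly_eq by auto
  next
    case False
    then have "3 * 3 \<le> \<bar>m\<bar> * \<bar>m\<bar>"
      by (intro mult_mono) auto
    then have "9 \<le> m * m"
      by (simp add: abs_mult_self_eq)
    then have "9 \<le> x\<^sup>2"
      using of_int_le_iff[of 9 "m * m", where 'a=real] unfolding x by (simp add: power2_eq_square)
    then show ?thesis
      unfolding poly_eq by simp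
  qed
qed

context symmetric_operator
begin

lemma dot_poly_op_path_test_poly:
  "dot n x (poly_op path_test_poly T x)
     = 4 * dot n (T x) (T x) - 5 * dot n ((T ^^ 2) x) ((T ^^ 2) x) + dot n ((T ^^ 3) x) ((T ^^ 3) x)"
proof -
  have "dot n x (poly_op path_test_poly T x)
      = 4 * dot n x ((T ^^ (1 + 1)) x) - 5 * dot n x ((T ^^ (2 + 2)) x) + dot n x ((T ^^ (3 + 3)) x)"
    by (simp add: dot_poly_op path_test_poly_coeffs eval_nat_numeral)
  then show ?thesis
    by (simp only: dot_funpow_double) simp
qed

end

section \<open>The adjacency operator near a path of degree-2 vertices\<close>

definition adj_op :: "nat \<Rightarrow> (nat \<Rightarrow> nat \<Rightarrow> bool) \<Rightarrow> (nat \<Rightarrow> real) \<Rightarrow> nat \<Rightarrow> real" where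
  "adj_op n E v i = (if i < n then \<Sum>j<n. (if E i j then 1 else 0) * v j else 0)"

lemma symmetric_operator_adj_op:
  assumes "\<And>i j. E i j \<Longrightarrow> E j i"
  shows "symmetric_operator n (adj_op n E)"
proof
  fix a b :: real and u v :: "nat \<Rightarrow> real"
  show "adj_op n E (\<lambda>i. a * u i + b * v i) = (\<lambda>i. a * adj_op n E u i + b * adj_op n E v i)"
    by (auto simp: adj_op_def sum.distrib sum_distrib_left algebra_simps)
  have "dot n u (adj_op n E v) = (\<Sum>i<n. \<Sum>j<n. u i * (if E i j then 1 else 0) * v j)"
    by (simp add: dot_def adj_op_def sum_distrib_left mult.assoc)
  also have "\<dots> = (\<Sum>j<n. \<Sum>i<n. (if E j i then 1 else 0) * u i * v j)"
  proof (subst sum.swap, intro sum.cong refl)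
    fix i j
    have "E i j = E j i"
      using assms by blast
    then show "u j * (if E j i then 1 else 0) * v i = (if E i j then 1 else 0) * u j * v i"
      by simp
  qed
  also have "\<dots> = dot n (adj_op n E u) v"
    by (simp add: dot_def adj_op_def sum_distrib_right)
  finally show "dot n u (adj_op n E v) = dot n (adj_op n E u) v" .
next
  fix i
  show "continuous_on UNIV (\<lambda>v. adj_op n E v i)"
    unfolding adj_op_def
    by (cases "i < n") (simp_all add: continuous_on_sum continuous_on_mult_left)
next
  fix v
  show "adj_op n E v \<in> vecs_below n"
    by (simp add: adj_op_def vecs_below_def)
qed

lemma eigenvalue_adj_matrixI:
  assumes "adj_op n E v = (\<lambda>i. lam * v i)" "dot n v v \<noteq> 0"
  shows "eigenvalue (adj_matrix n E) lam"
  unfolding eigenvalue_def eigenvector_def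
proof (intro exI conjI)
  show "vec n v \<in> carrier_vec (dim_row (adj_matrix n E))"
    by (simp add: adj_matrix_def)
  obtain i where "i < n" "v i \<noteq> 0"
    using assms(2) dot_self_eq_0_iff by blast
  then show "vec n v \<noteq> 0\<^sub>v (dim_row (adj_matrix n E))"
    by (auto simp: adj_matrix_def dest!: arg_cong[where f = "\<lambda>w. w $ i"])
  have "(adj_matrix n E *\<^sub>v vec n v) $ j = adj_op n E v j" if "j < n" for j
    using that by (simp add: adj_matrix_def adj_op_def scalar_prod_def atLeast0LessThan)
  then show "adj_matrix n E *\<^sub>v vec n v = lam \<cdot>\<^sub>v vec n v"
    using assms(1) by (intro eq_vecI) (simp_all add: adj_matrix_def)
qed

lemma adj_op_indicator_degree_2:
  assumes "simple_graph n E" "graph_degree n E y = 2" "E y x" "E y z" "x \<noteq> z"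
  shows "adj_op n E (indicator {y}) = (\<lambda>i. indicator {x} i + indicator {z} i)"
proof
  fix i
  have bounded: "E a b \<Longrightarrow> a < n \<and> b < n" and sym: "E a b \<Longrightarrow> E b a" for a b
    using assms(1) unfolding simple_graph_def by blast+
  have "{x, z} \<subseteq> {j. j < n \<and> E y j}"
    using assms(3,4) bounded by blast
  then have neighbours: "{j. j < n \<and> E y j} = {x, z}"
    using assms(2,5) unfolding graph_degree_def by (intro card_subset_eq[symmetric]) auto
  have "adj_op n E (indicator {y}) i = (if i < n \<and> E i y then 1 else 0)"
    using bounded[OF assms(3)] by (simp add: adj_op_def indicator_def sum.delta cong: if_cong)
  also have "\<dots> = indicator {x} i + indicator {z} i"
    using neighbours assms(5) sym by (auto simp: indicator_def)
  finally show "adj_op n E (indicator {y}) i = indicator {x} i + indicator {z} i" .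
qed

lemma indicator_in_vecs_below: "a < n \<Longrightarrow> indicator {a} \<in> vecs_below n"
  by (simp add: vecs_below_def indicator_def)

lemma dot_indicator:
  assumes "a < n"
  shows "dot n (indicator {a}) (indicator {b}) = (if a = b then 1 else 0)"
  using assms by (simp add: dot_def indicator_def of_bool_def if_distrib[of "\<lambda>x. x * _"] sum.delta
      cong: if_cong)

definition degree_2_path_segment :: "nat \<Rightarrow> (nat \<Rightarrow> nat \<Rightarrow> bool) \<Rightarrow> (nat \<Rightarrow> nat) \<Rightarrow> bool" where
  "degree_2_path_segment n E q \<longleftrightarrow>
     (\<forall>k<6. E (q k) (q (Suc k))) \<and> inj_on q {..6} \<and>
     (\<forall>k. 0 < k \<and> k < 6 \<longrightarrow> graph_degree n E (q k) = 2)"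

lemma degree_2_path_segment_edge:
  "degree_2_path_segment n E q \<Longrightarrow> k < 6 \<Longrightarrow> E (q k) (q (Suc k))"
  unfolding degree_2_path_segment_def by blast

lemma adj_op_indicator_path_segment:
  assumes "simple_graph n E" "degree_2_path_segment n E q" "Suc j = k" "l = Suc k" "k < 6"
  shows "adj_op n E (indicator {q k}) = (\<lambda>i. indicator {q j} i + indicator {q l} i)"
proof (rule adj_op_indicator_degree_2[OF assms(1)])
  show "graph_degree n E (q k) = 2"
    using assms(2-5) unfolding degree_2_path_segment_def by auto
  show "E (q k) (q j)" "E (q k) (q l)"
    using assms unfolding degree_2_path_segment_def simple_graph_def by auto
  show "q j \<noteq> q l"
    using assms(2-5) unfolding degree_2_path_segment_def by (auto dest: inj_onD)
qed

lemma dot_indicator_path_segment: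
  assumes "simple_graph n E" "degree_2_path_segment n E q" "k \<le> 6" "l \<le> 6"
  shows "dot n (indicator {q k}) (indicator {q l}) = (if k = l then 1 else 0)"
proof -
  have "E (q k) (q (Suc k)) \<or> E (q 5) (q k)"
    using degree_2_path_segment_edge[OF assms(2), of k] degree_2_path_segment_edge[OF assms(2), of 5]
      assms(3) by (cases "k = 6") simp_all
  then have "q k < n"
    using assms(1) unfolding simple_graph_def by blast
  then show ?thesis
    using assms(2-4) by (auto simp: degree_2_path_segment_def dot_indicator dest: inj_onD)
qed

lemma dot_path_test_poly_at_path_middle:
  assumes "simple_graph n E" "degree_2_path_segment n E q"
  shows "dot n (indicator {q 3}) (poly_op path_test_poly (adj_op n E) (indicator {q 3})) = -2"
proof -
  interpret A: symmetric_operator n "adj_op n E"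
    using assms(1) by (intro symmetric_operator_adj_op) (auto simp: simple_graph_def)
  define e :: "nat \<Rightarrow> nat \<Rightarrow> real" where "e k = indicator {q k}" for k
  note step = adj_op_indicator_path_segment[OF assms, folded e_def]
  have walk_steps:
    "adj_op n E (e 1) = (\<lambda>i. e 0 i + e 2 i)" "adj_op n E (e 2) = (\<lambda>i. e 1 i + e 3 i)"
    "adj_op n E (e 3) = (\<lambda>i. e 2 i + e 4 i)" "adj_op n E (e 4) = (\<lambda>i. e 3 i + e 5 i)"
    "adj_op n E (e 5) = (\<lambda>i. e 4 i + e 6 i)"
    by (rule step; simp)+
  note walk1 = walk_steps(3)
  have "(adj_op n E ^^ 2) (e 3) = adj_op n E (adj_op n E (e 3))"
    by (simp add: numeral_2_eq_2)
  also have "\<dots> = (\<lambda>i. e 1 i + 2 * e 3 i + e 5 i)"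
    by (simp add: walk_steps A.add fun_eq_iff)
  finally have walk2: "(adj_op n E ^^ 2) (e 3) = (\<lambda>i. e 1 i + 2 * e 3 i + e 5 i)" .
  have "adj_op n E ^^ 3 = adj_op n E \<circ> adj_op n E ^^ 2"
    by (simp add: eval_nat_numeral)
  then have "(adj_op n E ^^ 3) (e 3) = adj_op n E ((adj_op n E ^^ 2) (e 3))"
    by simp
  also have "\<dots> = (\<lambda>i. (e 0 i + e 2 i) + 2 * (e 2 i + e 4 i) + (e 4 i + e 6 i))"
    by (simp only: walk2 A.add A.scale walk_steps)
  also have "\<dots> = (\<lambda>i. e 0 i + 3 * e 2 i + 3 * e 4 i + e 6 i)"
    by (simp add: fun_eq_iff algebra_simps)
  finally have walk3: "(adj_op n E ^^ 3) (e 3) = (\<lambda>i. e 0 i + 3 * e 2 i + 3 * e 4 i + e 6 i)" .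
  show ?thesis
    unfolding e_def[symmetric] A.dot_poly_op_path_test_poly walk1 walk2 walk3
    by (simp add: dot_add_left dot_add_right dot_scale_left dot_scale_right e_def
        dot_indicator_path_segment[OF assms])
qed

lemma nonintegral_eigenvalue_if_path_segment:
  assumes "simple_graph n E" "degree_2_path_segment n E q"
  shows "\<exists>lam. eigenvalue (adj_matrix n E) lam \<and> lam \<notin> \<int>"
proof -
  interpret A: symmetric_operator n "adj_op n E"
    using assms(1) by (intro symmetric_operator_adj_op) (auto simp: simple_graph_def)
  have "E (q 3) (q 4)"
    using degree_2_path_segment_edge[OF assms(2), of 3] by simp
  then have "q 3 < n"
    using assms(1) unfolding simple_graph_def by blast
  moreover have "dot n (indicator {q 3}) (poly_op path_test_poly (adj_op n E) (indicator {q 3})) < 0"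
    using dot_path_test_poly_at_path_middle[OF assms] by simp
  ultimately obtain w lam where w: "dot n w w = 1" "adj_op n E w = (\<lambda>i. lam * w i)"
      and "poly path_test_poly lam < 0"
    using A.exists_eigenvector_poly_negative[OF indicator_in_vecs_below] by blast
  then have "lam \<notin> \<int>"
    using poly_path_test_poly_nonneg_Ints by force
  moreover have "eigenvalue (adj_matrix n E) lam"
    using w(1) by (intro eigenvalue_adj_matrixI[OF w(2)]) simp
  ultimately show ?thesis
    by blast
qed

theorem theorem18:
  fixes n :: nat and E :: "nat \<Rightarrow> nat \<Rightarrow> bool" and u v :: nat and p :: "nat list"
  assumes "simple_graph n E"
    and "u < n" and "v < n"
    and "graph_path E p u v"
    and "\<forall>q. graph_path E q u v \<longrightarrow> q = p"
    and "length p - 1 \<ge> 7"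
    and "\<forall>i. 0 < i \<and> i < length p - 1 \<longrightarrow> graph_degree n E (p ! i) = 2"
  shows "\<exists>k::real. eigenvalue (adj_matrix n E) k \<and> k \<notin> \<int>"
proof (rule nonintegral_eigenvalue_if_path_segment[OF assms(1)])
  \<comment> \<open>Only the vertices p ! 0, ..., p ! 6 are used: neither the uniqueness of the path nor
    its endpoints matter.\<close>
  show "degree_2_path_segment n E (nth p)"
    using assms(4,6,7) unfolding degree_2_path_segment_def graph_path_def
    by (auto intro: inj_on_nth)
qed

end
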